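(* Let $H:\mathbb{R}^n\to\mathbb{R}$ be $\mu_H$-strongly convex with $\mu_H>0$, let $f^i_{j_i}:\mathbb{R}^n\to\mathbb{R}$ ($i\in[S]$, $j_i\in[I_i]$) be convex, and let $X\subset\mathbb{R}^n$ be nonempty, compact and convex. Let $m:=\sum_{i=1}^S I_i$, $F:=\sum_{i=1}^S\sum_{j_i=1}^{I_i} f^i_{j_i}$, and let $x^*_H$ be the unique solution of the bilevel problem: minimize $H(x)$ subject to $x\in\operatorname{argmin}_{y\in X}F(y)$. Let $\epsilon\in(0,0.5)$, and define $\gamma_k=\frac{\gamma_1}{k^a}$ and $\lambda_k=\frac{\lambda_1}{k^b}$ for $k\ge1$, where $\gamma_1,\lambda_1>0$ with $\gamma_1\lambda_1\mu_H\le 2m$, $a=0.5+0.5\epsilon$ and $b=0.5-\epsilon$. Let $\{x_k\}_{k=1}^\infty$ be a sequence generated by FISM (described in the context) with these stepsizes, and set $\hat x_K:=\frac{\sum_{k=1}^K\gamma_kx_k}{\sum_{k=1}^K\gamma_k}$. Then for $K\ge1$, $$F(\hat x_K)-F(x^*_H)\le\mathcal{O}\Big(\frac{1}{K^{0.5-\epsilon}}\Big).$$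
   Context: Notation: $[s]:=\{1,\dots,s\}$; $P_X$ is the Euclidean metric projection onto $X$; $\partial$ denotes the convex subdifferential; $\mathcal{O}(\cdot)$ hides a constant independent of $K$. FISM (Federated Incremental Subgradient Method): given a starting point $x_1\in\mathbb{R}^n$ and positive stepsizes $\{\gamma_k\},\{\lambda_k\}$, for $k=1,2,\dots$: pick $\mathcal{H}_k\in\partial H(x_k)$; for every client $i\in[S]$ set $x^i_{k,1}=x_k$ and for $j_i=1,\dots,I_i$ pick $g^i_{k,j_i}\in\partial f^i_{j_i}(x^i_{k,j_i})$ and set $x^i_{k,j_i+1}=P_X\big[x^i_{k,j_i}-\gamma_k g^i_{k,j_i}-\frac{\gamma_k\lambda_k}{m}\mathcal{H}_k\big]$; then set $x^i_k=x^i_{k,I_i+1}$ and $x_{k+1}=\frac1S\sum_{i=1}^S x^i_k$. *)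

theory Defs
  imports "HOL-Analysis.Analysis"
begin

definition subdiff :: "('a::real_inner \<Rightarrow> real) \<Rightarrow> 'a \<Rightarrow> 'a set" where
  "subdiff f x = {g. \<forall>y. f x + inner g (y - x) \<le> f y}"

definition strongly_convex :: "real \<Rightarrow> ('a::real_normed_vector \<Rightarrow> real) \<Rightarrow> bool" where
  "strongly_convex mu f \<longleftrightarrow> (\<forall>x y t. 0 \<le> t \<and> t \<le> 1 \<longrightarrow>
     f (t *\<^sub>R x + (1 - t) *\<^sub>R y) \<le> t * f x + (1 - t) * f y - mu / 2 * t * (1 - t) * (norm (x - y))\<^sup>2)"

abbreviation proj :: "'a::euclidean_space set \<Rightarrow> 'a \<Rightarrow> 'a" where
  "proj X v \<equiv> closest_point X v"

definition bilevel_solution :: "('a \<Rightarrow> real) \<Rightarrow> ('a \<Rightarrow> real) \<Rightarrow> 'a set \<Rightarrow> 'a \<Rightarrow> bool" where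
  "bilevel_solution H F X x \<longleftrightarrow>
     x \<in> X \<and> (\<forall>y\<in>X. F x \<le> F y) \<and>
     (\<forall>z\<in>X. (\<forall>y\<in>X. F z \<le> F y) \<longrightarrow> H x \<le> H z)"

text \<open>FISM iteration. Clients i in {1..S}, client i holds f i j for j in {1..I i};
  z k i j is the inner iterate x^i_{k,j}, g k i j the chosen subgradient, hH k the chosen
  subgradient of H at x k.\<close>
definition FISM ::
  "nat \<Rightarrow> (nat \<Rightarrow> nat) \<Rightarrow> (nat \<Rightarrow> nat \<Rightarrow> 'a::euclidean_space \<Rightarrow> real) \<Rightarrow> ('a \<Rightarrow> real) \<Rightarrow> 'a set
   \<Rightarrow> (nat \<Rightarrow> real) \<Rightarrow> (nat \<Rightarrow> real) \<Rightarrow> (nat \<Rightarrow> 'a) \<Rightarrow> bool" where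
  "FISM S I f H X gam lam x \<longleftrightarrow>
    (\<exists>hH z g. \<forall>k\<ge>1.
        hH k \<in> subdiff H (x k) \<and>
        (\<forall>i\<in>{1..S}.
           z k i 1 = x k \<and>
           (\<forall>j\<in>{1..I i}.
              g k i j \<in> subdiff (f i j) (z k i j) \<and>
              z k i (j + 1) = proj X (z k i j - gam k *\<^sub>R g k i j
                 - (gam k * lam k / real (\<Sum>i'\<in>{1..S}. I i')) *\<^sub>R hH k))) \<and>
        x (k + 1) = (1 / real S) *\<^sub>R (\<Sum>i\<in>{1..S}. z k i (I i + 1)))"

end

theory Submission
  imports Defs
begin

(*
  A FISM round performs, on every client, a pass of projected incremental subgradient steps
  in which the subgradient of H is frozen at the common starting point x_k. Comparing each
  step with x_k costs an error proportional to the distance already travelled, which is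
  O(gamma_k (1 + lambda_k)); with a common bound G on the subgradients and Lipschitz constants
  of all f^i_j and of H on the compact set X, and averaging over the clients, one obtains for
  every y in X and k >= 2

    gamma_k (F(x_k) - F(y)) <= S/2 (|x_k - y|^2 - |x_{k+1} - y|^2)
                               + C (gamma_k lambda_k + gamma_k^2 (1 + lambda_k)^2).

  For gamma_k = gamma_1 k^-(1/2 + eps/2) and lambda_k = lambda_1 k^-(1/2 - eps) the error is
  O(k^(eps/2 - 1)), so telescoping gives sum_{k<=K} gamma_k (F(x_k) - F(y)) = O(K^(eps/2)),
  while sum_{k<=K} gamma_k >= gamma_1 K^(1/2 - eps/2). Jensen's inequality for the convex F
  at the weighted average then yields the rate K^-(1/2 - eps).

  The bound holds for every y in X.
*)

section \<open>Convex functions\<close>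

definition subgrad_bounded_lipschitz_on :: "real \<Rightarrow> 'a::real_inner set \<Rightarrow> ('a \<Rightarrow> real) \<Rightarrow> bool" where
  "subgrad_bounded_lipschitz_on G X f \<longleftrightarrow> (\<forall>z\<in>X. \<forall>g\<in>subdiff f z. norm g \<le> G) \<and> G-lipschitz_on X f"

lemma strongly_convex_imp_convex_on:
  assumes "strongly_convex \<mu> f" "0 \<le> \<mu>"
  shows "convex_on UNIV f"
proof (rule convex_onI)
  fix t :: real and u v assume t: "0 < t" "t < 1"
  have sc: "f (s *\<^sub>R u + (1 - s) *\<^sub>R v) \<le> s * f u + (1 - s) * f v - \<mu> / 2 * s * (1 - s) * (norm (u - v))\<^sup>2"
    if "0 \<le> s" "s \<le> 1" for s
    using assms(1) that unfolding strongly_convex_def by blast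
  have "f ((1 - t) *\<^sub>R u + t *\<^sub>R v) \<le> (1 - t) * f u + t * f v - \<mu> / 2 * (1 - t) * t * (norm (u - v))\<^sup>2"
    using sc[of "1 - t"] t by (simp add: mult.commute)
  moreover have "0 \<le> \<mu> / 2 * (1 - t) * t * (norm (u - v))\<^sup>2" using t assms(2) by simp
  ultimately show "f ((1 - t) *\<^sub>R u + t *\<^sub>R v) \<le> (1 - t) * f u + t * f v" by linarith
qed simp

lemma convex_on_sum_fun:
  assumes "finite A" "convex S" "\<And>a. a \<in> A \<Longrightarrow> convex_on S (f a)"
  shows "convex_on S (\<lambda>x. \<Sum>a\<in>A. f a x)"
  using assms by (induction A rule: finite_induct) (auto simp: convex_on_const)

lemma convex_on_weighted_mean_gap:
  fixes F :: "'a::real_vector \<Rightarrow> real"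
  assumes F: "convex_on UNIV F" and "finite T" and w: "\<And>k. k \<in> T \<Longrightarrow> 0 \<le> w k" "0 < sum w T"
  shows "F ((1 / sum w T) *\<^sub>R (\<Sum>k\<in>T. w k *\<^sub>R x k)) - F y \<le> (\<Sum>k\<in>T. w k * (F (x k) - F y)) / sum w T"
proof -
  have "(\<Sum>k\<in>T. w k / sum w T) = 1" using w(2) by (simp add: sum_divide_distrib[symmetric])
  then have "F (\<Sum>k\<in>T. (w k / sum w T) *\<^sub>R x k) \<le> (\<Sum>k\<in>T. (w k / sum w T) * F (x k))"
    using w \<open>finite T\<close> by (intro convex_on_sum[OF \<open>finite T\<close> _ F]) auto
  moreover have "(1 / sum w T) *\<^sub>R (\<Sum>k\<in>T. w k *\<^sub>R x k) = (\<Sum>k\<in>T. (w k / sum w T) *\<^sub>R x k)"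
    by (simp add: scaleR_sum_right)
  moreover have "(\<Sum>k\<in>T. (w k / sum w T) * F (x k)) - F y = (\<Sum>k\<in>T. w k * (F (x k) - F y)) / sum w T"
    using w(2)
    by (simp add: sum_divide_distrib[symmetric] sum_subtractf sum_distrib_left[symmetric]
        sum_distrib_right[symmetric] field_simps)
  ultimately show ?thesis by simp
qed

lemma subdiff_norm_le:
  fixes f :: "'a::real_inner \<Rightarrow> real"
  assumes g: "g \<in> subdiff f z" and M: "\<And>w. w \<in> cball z 1 \<Longrightarrow> f w - f z \<le> M"
  shows "norm g \<le> M"
proof (cases "g = 0")
  case True
  then show ?thesis using M[of z] by simp
next
  case False
  define w where "w = z + (1 / norm g) *\<^sub>R g"
  have "inner g (w - z) = norm g"
    using False by (simp add: w_def power2_norm_eq_inner[symmetric] power2_eq_square)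
  moreover have "f z + inner g (w - z) \<le> f w"
    using g unfolding subdiff_def by blast
  moreover have "w \<in> cball z 1"
    using False by (simp add: w_def dist_norm)
  ultimately show ?thesis using M[of w] by simp
qed

lemma convex_on_diff_le_norm:
  fixes f :: "'a::real_normed_vector \<Rightarrow> real"
  assumes f: "convex_on UNIV f" and "0 \<le> M" and M: "\<And>w. w \<in> cball u 1 \<Longrightarrow> f w - f v \<le> M"
  shows "f u - f v \<le> M * norm (u - v)"
proof (cases "u = v")
  case True
  then show ?thesis by simp
next
  case False
  define d where "d = norm (u - v)"
  have d: "d > 0" using False by (simp add: d_def)
  define w where "w = u + (1 / d) *\<^sub>R (u - v)"
  define t where "t = d / (1 + d)"
  have t: "0 \<le> t" "t \<le> 1" "t \<le> d" using d by (auto simp: t_def field_simps)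
  \<comment> \<open>\<open>u\<close> is a convex combination of \<open>v\<close> and the point \<open>w\<close> one unit beyond \<open>u\<close>
    on the ray from \<open>v\<close>\<close>
  have "t / d = 1 - t"
    using d by (simp add: t_def field_simps) (smt (verit) mult_pos_pos)
  then have "t *\<^sub>R w + (1 - t) *\<^sub>R v = t *\<^sub>R u + (1 - t) *\<^sub>R (u - v) + (1 - t) *\<^sub>R v"
    by (simp add: w_def scaleR_right_distrib)
  then have "u = t *\<^sub>R w + (1 - t) *\<^sub>R v" by (simp add: algebra_simps)
  then have "f u \<le> t * f w + (1 - t) * f v"
    using convex_onD[OF f, of "1 - t" w v] t by simp
  then have "f u - f v \<le> t * (f w - f v)" by (simp add: algebra_simps)
  also have "\<dots> \<le> t * M"
    using M[of w] t d by (intro mult_left_mono) (auto simp: w_def dist_norm d_def)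
  also have "\<dots> \<le> d * M"
    using t \<open>0 \<le> M\<close> by (intro mult_right_mono)
  finally show ?thesis by (simp add: d_def mult.commute)
qed

lemma convex_on_subgrad_bounded_lipschitz:
  fixes f :: "'a::euclidean_space \<Rightarrow> real"
  assumes f: "convex_on UNIV f" and X: "compact X"
  shows "\<exists>G. subgrad_bounded_lipschitz_on G X f"
proof -
  obtain R where "R > 0" and R: "\<And>x. x \<in> X \<Longrightarrow> norm x \<le> R"
    using compact_imp_bounded[OF X] unfolding bounded_pos by blast
  have "continuous_on (cball 0 (R + 1)) f"
    using convex_on_continuous[OF open_UNIV f] continuous_on_subset by blast
  then have "bounded (f ` cball 0 (R + 1))"
    by (intro compact_imp_bounded compact_continuous_image compact_cball)
  then obtain B where B: "\<And>w. w \<in> cball 0 (R + 1) \<Longrightarrow> \<bar>f w\<bar> \<le> B"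
    unfolding bounded_real by blast
  have B0: "0 \<le> B" using B[of 0] \<open>R > 0\<close> by force
  have near: "f w - f v \<le> 2 * B" if "u \<in> X" "v \<in> X" "w \<in> cball u 1" for u v w
  proof -
    have "norm u \<le> R" "norm v \<le> R" "norm (w - u) \<le> 1"
      using that R by (auto simp: dist_norm norm_minus_commute)
    then have "w \<in> cball 0 (R + 1)" "v \<in> cball 0 (R + 1)"
      using norm_triangle_sub[of w u] by auto
    then show ?thesis using B[of w] B[of v] by linarith
  qed
  have diff: "f u - f v \<le> 2 * B * norm (u - v)" if "u \<in> X" "v \<in> X" for u v
    using that B0 by (intro convex_on_diff_le_norm[OF f] near) auto
  have "(2 * B)-lipschitz_on X f"
  proof (rule lipschitz_onI)
    fix u v assume "u \<in> X" "v \<in> X"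
    then show "dist (f u) (f v) \<le> 2 * B * dist u v"
      using diff[of u v] diff[of v u] by (simp add: dist_real_def dist_norm norm_minus_commute)
  qed (use B0 in simp)
  moreover have "norm g \<le> 2 * B" if "z \<in> X" "g \<in> subdiff f z" for z g
    using that near[of z z] by (intro subdiff_norm_le) auto
  ultimately show ?thesis unfolding subgrad_bounded_lipschitz_on_def by blast
qed

lemma finite_convex_family_subgrad_bounded_lipschitz:
  fixes \<Phi> :: "('a::euclidean_space \<Rightarrow> real) set"
  assumes "finite \<Phi>" "\<forall>\<phi>\<in>\<Phi>. convex_on UNIV \<phi>" "compact X"
  shows "\<exists>G. \<forall>\<phi>\<in>\<Phi>. subgrad_bounded_lipschitz_on G X \<phi>"
  using assms(1,2)
proof (induction \<Phi> rule: finite_induct)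
  case empty
  then show ?case by simp
next
  case (insert \<phi> \<Phi>)
  obtain G1 where G1: "\<forall>\<psi>\<in>\<Phi>. subgrad_bounded_lipschitz_on G1 X \<psi>"
    using insert by blast
  obtain G2 where G2: "subgrad_bounded_lipschitz_on G2 X \<phi>"
    using convex_on_subgrad_bounded_lipschitz[OF _ assms(3)] insert.prems by blast
  have "\<forall>\<psi>\<in>insert \<phi> \<Phi>. subgrad_bounded_lipschitz_on (max G1 G2) X \<psi>"
    using G1 G2 unfolding subgrad_bounded_lipschitz_on_def
    by (auto intro: lipschitz_on_le order_trans[OF _ max.cobounded1] order_trans[OF _ max.cobounded2])
  then show ?case by blast
qed

section \<open>Projected incremental subgradient steps\<close>

lemma closest_point_dist_le:
  fixes X :: "'a::euclidean_space set"
  assumes "convex X" "closed X" "y \<in> X"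
  shows "norm (closest_point X w - y) \<le> norm (w - y)"
  using closest_point_lipschitz[OF assms(1,2), of w y] closest_point_self[OF assms(3)] assms(3)
  by (auto simp: dist_norm)

lemma closest_point_step_sq:
  fixes X :: "'a::euclidean_space set"
  assumes "convex X" "closed X" "y \<in> X"
  shows "(norm (closest_point X (z - d) - y))\<^sup>2 \<le> (norm (z - y))\<^sup>2 - 2 * inner d (z - y) + (norm d)\<^sup>2"
proof -
  have "(norm (closest_point X (z - d) - y))\<^sup>2 \<le> (norm ((z - y) - d))\<^sup>2"
    using closest_point_dist_le[OF assms, of "z - d"] by (simp add: algebra_simps power_mono)
  also have "\<dots> = (norm (z - y))\<^sup>2 - 2 * inner d (z - y) + (norm d)\<^sup>2"
    by (simp add: power2_norm_eq_inner inner_diff_left inner_diff_right inner_commute)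
  finally show ?thesis .
qed

lemma incremental_subgradient_step:
  fixes \<phi> H :: "'a::euclidean_space \<Rightarrow> real"
  assumes X: "convex X" "closed X" and "z \<in> X" "x0 \<in> X" "y \<in> X"
    and g: "g \<in> subdiff \<phi> z" "norm g \<le> G" and lip: "G-lipschitz_on X \<phi>"
    and h: "h \<in> subdiff H x0" "norm h \<le> G"
    and "0 \<le> \<gamma>" "0 \<le> c"
    and z': "z' = closest_point X (z - \<gamma> *\<^sub>R g - c *\<^sub>R h)"
  shows "z' \<in> X" and "norm (z' - z) \<le> (\<gamma> + c) * G"
    and "(norm (z' - y))\<^sup>2 \<le> (norm (z - y))\<^sup>2 - 2 * \<gamma> * (\<phi> x0 - \<phi> y) - 2 * c * (H x0 - H y)
           + 2 * ((\<gamma> + c) * G) * norm (z - x0) + ((\<gamma> + c) * G)\<^sup>2"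
proof -
  define d where "d = \<gamma> *\<^sub>R g + c *\<^sub>R h"
  have z'd: "z' = closest_point X (z - d)" by (simp add: z' d_def algebra_simps)
  then show "z' \<in> X" using closest_point_in_set[OF X(2)] \<open>z \<in> X\<close> by auto
  have "norm d \<le> \<gamma> * norm g + c * norm h"
    using norm_triangle_ineq[of "\<gamma> *\<^sub>R g" "c *\<^sub>R h"] \<open>0 \<le> \<gamma>\<close> \<open>0 \<le> c\<close> by (simp add: d_def)
  also have "\<dots> \<le> (\<gamma> + c) * G"
    using g h \<open>0 \<le> \<gamma>\<close> \<open>0 \<le> c\<close> by (simp add: distrib_right add_mono mult_left_mono)
  finally have dG: "norm d \<le> (\<gamma> + c) * G" .
  show "norm (z' - z) \<le> (\<gamma> + c) * G"
    using closest_point_dist_le[OF X(1,2) \<open>z \<in> X\<close>, of "z - d"] dG by (simp add: z'd)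
  have "\<phi> z + inner g (y - z) \<le> \<phi> y" using g(1) unfolding subdiff_def by blast
  moreover have "\<phi> x0 - \<phi> z \<le> G * norm (z - x0)"
    using lipschitz_on_normD[OF lip \<open>x0 \<in> X\<close> \<open>z \<in> X\<close>] by (simp add: norm_minus_commute)
  ultimately have ig: "\<phi> x0 - \<phi> y - G * norm (z - x0) \<le> inner g (z - y)"
    by (simp add: inner_diff_right)
  have "H x0 + inner h (y - x0) \<le> H y" using h(1) unfolding subdiff_def by blast
  moreover have "- (G * norm (z - x0)) \<le> inner h (z - x0)"
    using Cauchy_Schwarz_ineq2[of h "z - x0"] mult_right_mono[OF h(2) norm_ge_zero[of "z - x0"]]
    by linarith
  moreover have "inner h (z - y) = inner h (x0 - y) + inner h (z - x0)"
    by (simp add: inner_diff_right)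
  ultimately have ih: "H x0 - H y - G * norm (z - x0) \<le> inner h (z - y)"
    by (simp add: inner_diff_right)
  have "\<gamma> * (\<phi> x0 - \<phi> y) + c * (H x0 - H y) - (\<gamma> + c) * G * norm (z - x0) \<le> inner d (z - y)"
    using mult_left_mono[OF ig \<open>0 \<le> \<gamma>\<close>] mult_left_mono[OF ih \<open>0 \<le> c\<close>]
    by (simp add: d_def inner_add_left algebra_simps)
  moreover have "(norm d)\<^sup>2 \<le> ((\<gamma> + c) * G)\<^sup>2" using dG by (simp add: power_mono)
  ultimately show "(norm (z' - y))\<^sup>2 \<le> (norm (z - y))\<^sup>2 - 2 * \<gamma> * (\<phi> x0 - \<phi> y) - 2 * c * (H x0 - H y)
           + 2 * ((\<gamma> + c) * G) * norm (z - x0) + ((\<gamma> + c) * G)\<^sup>2"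
    using closest_point_step_sq[OF X(1,2) \<open>y \<in> X\<close>, of z d] by (simp add: z'd algebra_simps)
qed

lemma incremental_subgradient_pass:
  fixes \<phi> :: "nat \<Rightarrow> 'a::euclidean_space \<Rightarrow> real" and H :: "'a \<Rightarrow> real"
  assumes X: "convex X" "closed X" and "x0 \<in> X" "y \<in> X"
    and start: "zz 1 = x0"
    and steps: "\<forall>j\<in>{1..n}. gg j \<in> subdiff (\<phi> j) (zz j) \<and>
                  zz (j + 1) = closest_point X (zz j - \<gamma> *\<^sub>R gg j - c *\<^sub>R h)"
    and bounds: "\<forall>j\<in>{1..n}. subgrad_bounded_lipschitz_on G X (\<phi> j)"
    and h: "h \<in> subdiff H x0" "norm h \<le> G"
    and "0 \<le> \<gamma>" "0 \<le> c"
  shows "(norm (zz (n + 1) - y))\<^sup>2 \<le> (norm (x0 - y))\<^sup>2 - 2 * \<gamma> * (\<Sum>j\<in>{1..n}. \<phi> j x0 - \<phi> j y)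
           - 2 * c * real n * (H x0 - H y) + (real n * (\<gamma> + c) * G)\<^sup>2"
proof -
  define \<delta> where "\<delta> = (\<gamma> + c) * G"
  \<comment> \<open>the pass drifts at most \<open>\<delta>\<close> per step away from \<open>x0\<close>, and the drift errors
    \<open>2 m \<delta>\<^sup>2 + \<delta>\<^sup>2\<close> of the steps add up to \<open>(n \<delta>)\<^sup>2\<close>\<close>
  have "zz (m + 1) \<in> X \<and> norm (zz (m + 1) - x0) \<le> real m * \<delta> \<and>
     (norm (zz (m + 1) - y))\<^sup>2 \<le> (norm (x0 - y))\<^sup>2 - 2 * \<gamma> * (\<Sum>j\<in>{1..m}. \<phi> j x0 - \<phi> j y)
        - 2 * c * real m * (H x0 - H y) + (real m * \<delta>)\<^sup>2" if "m \<le> n" for m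
    using that
  proof (induction m)
    case 0
    then show ?case using start \<open>x0 \<in> X\<close> by simp
  next
    case (Suc m)
    then have IH: "zz (m + 1) \<in> X" "norm (zz (m + 1) - x0) \<le> real m * \<delta>"
      "(norm (zz (m + 1) - y))\<^sup>2 \<le> (norm (x0 - y))\<^sup>2 - 2 * \<gamma> * (\<Sum>j\<in>{1..m}. \<phi> j x0 - \<phi> j y)
        - 2 * c * real m * (H x0 - H y) + (real m * \<delta>)\<^sup>2"
      by auto
    have j: "Suc m \<in> {1..n}" using Suc.prems by simp
    have g: "gg (Suc m) \<in> subdiff (\<phi> (Suc m)) (zz (m + 1))"
      and proj_eq: "zz (Suc m + 1) = closest_point X (zz (m + 1) - \<gamma> *\<^sub>R gg (Suc m) - c *\<^sub>R h)"
      using steps j by auto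
    have gG: "norm (gg (Suc m)) \<le> G" and lip: "G-lipschitz_on X (\<phi> (Suc m))"
      using bspec[OF bounds j] g IH(1) unfolding subgrad_bounded_lipschitz_on_def by auto
    note step = incremental_subgradient_step[OF X IH(1) \<open>x0 \<in> X\<close> \<open>y \<in> X\<close> g gG lip h
        \<open>0 \<le> \<gamma>\<close> \<open>0 \<le> c\<close> proj_eq, folded \<delta>_def]
    have "G \<ge> 0" using h(2) norm_ge_zero[of h] by linarith
    then have "\<delta> \<ge> 0" using \<open>0 \<le> \<gamma>\<close> \<open>0 \<le> c\<close> unfolding \<delta>_def by simp
    have drift: "norm (zz (Suc m + 1) - x0) \<le> real (Suc m) * \<delta>"
      using norm_diff_triangle_le[OF step(2) IH(2)] by (simp add: algebra_simps)
    have "2 * \<delta> * norm (zz (m + 1) - x0) \<le> 2 * \<delta> * (real m * \<delta>)"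
      using IH(2) \<open>\<delta> \<ge> 0\<close> by (simp add: mult_left_mono)
    then have "(norm (zz (Suc m + 1) - y))\<^sup>2 \<le> (norm (x0 - y))\<^sup>2
        - 2 * \<gamma> * (\<Sum>j\<in>{1..Suc m}. \<phi> j x0 - \<phi> j y) - 2 * c * real (Suc m) * (H x0 - H y)
        + (real (Suc m) * \<delta>)\<^sup>2"
      using step(3) IH(3) by (simp add: algebra_simps power2_eq_square)
    then show ?case using step(1) drift by simp
  qed
  then show ?thesis unfolding \<delta>_def by (simp add: mult.assoc)
qed

section \<open>Rounds of FISM\<close>

lemma norm_mean_sq_le:
  fixes v :: "'b \<Rightarrow> 'a::real_normed_vector"
  assumes "finite A" "A \<noteq> {}"
  shows "(norm ((1 / real (card A)) *\<^sub>R (\<Sum>i\<in>A. v i)))\<^sup>2 \<le> (\<Sum>i\<in>A. (norm (v i))\<^sup>2) / real (card A)"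
proof -
  have n: "real (card A) > 0" using assms by (simp add: card_gt_0_iff)
  have "(norm ((1 / real (card A)) *\<^sub>R (\<Sum>i\<in>A. v i)))\<^sup>2 \<le> ((\<Sum>i\<in>A. norm (v i)) / real (card A))\<^sup>2"
    using norm_sum[of v A] n by (intro power_mono) (auto simp: divide_right_mono)
  also have "\<dots> \<le> (\<Sum>i\<in>A. (norm (v i))\<^sup>2) * real (card A) / (real (card A))\<^sup>2"
    using sum_squared_le_sum_of_squares[of "\<lambda>i. norm (v i)" A] n
    by (simp add: power_divide divide_right_mono)
  also have "\<dots> = (\<Sum>i\<in>A. (norm (v i))\<^sup>2) / real (card A)"
    using n by (simp add: power2_eq_square)
  finally show ?thesis .
qed

lemma FISM_round:
  fixes f :: "nat \<Rightarrow> nat \<Rightarrow> 'a::euclidean_space \<Rightarrow> real" and H :: "'a \<Rightarrow> real"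
  assumes X: "convex X" "closed X" and "x0 \<in> X" "y \<in> X"
    and "S \<ge> 1" and I_pos: "\<forall>i\<in>{1..S}. I i \<ge> 1"
    and bounds: "\<forall>i\<in>{1..S}. \<forall>j\<in>{1..I i}. subgrad_bounded_lipschitz_on G X (f i j)"
    and h: "h \<in> subdiff H x0" "norm h \<le> G"
    and "0 \<le> \<gamma>" "0 \<le> c"
    and clients: "\<forall>i\<in>{1..S}. z i 1 = x0 \<and> (\<forall>j\<in>{1..I i}. g i j \<in> subdiff (f i j) (z i j) \<and>
                    z i (j + 1) = closest_point X (z i j - \<gamma> *\<^sub>R g i j - c *\<^sub>R h))"
    and x': "x' = (1 / real S) *\<^sub>R (\<Sum>i\<in>{1..S}. z i (I i + 1))"
  defines "m \<equiv> real (\<Sum>i\<in>{1..S}. I i)"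
  shows "(norm (x' - y))\<^sup>2 \<le> (norm (x0 - y))\<^sup>2
           - 2 * \<gamma> / S * ((\<Sum>i\<in>{1..S}. \<Sum>j\<in>{1..I i}. f i j x0) - (\<Sum>i\<in>{1..S}. \<Sum>j\<in>{1..I i}. f i j y))
           - 2 * c * m / S * (H x0 - H y) + (m * (\<gamma> + c) * G)\<^sup>2 / S"
proof -
  define A where "A i = (\<Sum>j\<in>{1..I i}. f i j x0 - f i j y)" for i
  define \<delta> where "\<delta> = (\<gamma> + c) * G"
  have S: "real S > 0" using \<open>S \<ge> 1\<close> by simp
  have client: "(norm (z i (I i + 1) - y))\<^sup>2 \<le> (norm (x0 - y))\<^sup>2 - 2 * \<gamma> * A i
      - 2 * c * I i * (H x0 - H y) + I i * (m * \<delta>\<^sup>2)" if i: "i \<in> {1..S}" for i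
  proof -
    have "I i \<le> m" unfolding m_def of_nat_le_iff using i by (intro member_le_sum) auto
    then have "I i * (I i * \<delta>\<^sup>2) \<le> I i * (m * \<delta>\<^sup>2)"
      by (intro mult_left_mono mult_right_mono) auto
    then have "(I i * \<delta>)\<^sup>2 \<le> I i * (m * \<delta>\<^sup>2)"
      by (simp add: power2_eq_square algebra_simps)
    then show ?thesis
      using incremental_subgradient_pass[OF X \<open>x0 \<in> X\<close> \<open>y \<in> X\<close>, of "z i" "I i" "g i" "f i" \<gamma> c h G H]
        clients bounds h i \<open>0 \<le> \<gamma>\<close> \<open>0 \<le> c\<close>
      unfolding A_def \<delta>_def by (simp add: mult.assoc)
  qed
  have "x' - y = (1 / real S) *\<^sub>R (\<Sum>i\<in>{1..S}. z i (I i + 1) - y)"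
    using S by (simp add: x' sum_subtractf scaleR_diff_right sum_constant_scaleR)
  then have "(norm (x' - y))\<^sup>2 \<le> (\<Sum>i\<in>{1..S}. (norm (z i (I i + 1) - y))\<^sup>2) / S"
    using norm_mean_sq_le[of "{1..S}" "\<lambda>i. z i (I i + 1) - y"] \<open>S \<ge> 1\<close> by simp
  also have "\<dots> \<le> (\<Sum>i\<in>{1..S}. (norm (x0 - y))\<^sup>2 - 2 * \<gamma> * A i
      - 2 * c * I i * (H x0 - H y) + I i * (m * \<delta>\<^sup>2)) / S"
    using client S by (intro divide_right_mono sum_mono) auto
  also have "\<dots> = (norm (x0 - y))\<^sup>2 - 2 * \<gamma> / S * (\<Sum>i\<in>{1..S}. A i) - 2 * c * m / S * (H x0 - H y)
      + (m * \<delta>)\<^sup>2 / S"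
    using S by (simp add: sum_subtractf sum.distrib sum_distrib_left sum_distrib_right[symmetric]
        m_def power2_eq_square diff_divide_distrib add_divide_distrib algebra_simps)
  finally show ?thesis by (simp add: A_def \<delta>_def sum_subtractf mult.assoc)
qed

lemma FISM_round_gap:
  fixes f :: "nat \<Rightarrow> nat \<Rightarrow> 'a::euclidean_space \<Rightarrow> real" and H :: "'a \<Rightarrow> real"
  assumes X: "convex X" "closed X" and "x0 \<in> X" "y \<in> X"
    and "S \<ge> 1" and I_pos: "\<forall>i\<in>{1..S}. I i \<ge> 1"
    and bounds: "\<forall>i\<in>{1..S}. \<forall>j\<in>{1..I i}. subgrad_bounded_lipschitz_on G X (f i j)"
    and h: "h \<in> subdiff H x0" "norm h \<le> G"
    and "0 \<le> \<gamma>" "0 \<le> lam"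
    and clients: "\<forall>i\<in>{1..S}. z i 1 = x0 \<and> (\<forall>j\<in>{1..I i}. g i j \<in> subdiff (f i j) (z i j) \<and>
                    z i (j + 1) = closest_point X (z i j - \<gamma> *\<^sub>R g i j
                      - (\<gamma> * lam / real (\<Sum>i\<in>{1..S}. I i)) *\<^sub>R h))"
    and x': "x' = (1 / real S) *\<^sub>R (\<Sum>i\<in>{1..S}. z i (I i + 1))"
  defines "m \<equiv> real (\<Sum>i\<in>{1..S}. I i)"
  shows "\<gamma> * ((\<Sum>i\<in>{1..S}. \<Sum>j\<in>{1..I i}. f i j x0) - (\<Sum>i\<in>{1..S}. \<Sum>j\<in>{1..I i}. f i j y))
           \<le> S / 2 * ((norm (x0 - y))\<^sup>2 - (norm (x' - y))\<^sup>2) + \<gamma> * lam * (H y - H x0)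
             + (m * G)\<^sup>2 / 2 * (\<gamma> * (1 + lam))\<^sup>2"
proof -
  define c where "c = \<gamma> * lam / m"
  have S: "real S > 0" using \<open>S \<ge> 1\<close> by simp
  have "1 \<le> I 1" "I 1 \<le> (\<Sum>i\<in>{1..S}. I i)" using I_pos \<open>S \<ge> 1\<close> by (auto intro: member_le_sum)
  then have m: "m \<ge> 1" unfolding m_def by linarith
  have "G \<ge> 0" using h(2) norm_ge_zero[of h] by linarith
  have "0 \<le> c" and cm: "2 * c * m = 2 * \<gamma> * lam"
    using \<open>0 \<le> \<gamma>\<close> \<open>0 \<le> lam\<close> m by (simp_all add: c_def)
  have "c \<le> \<gamma> * lam"
    using divide_left_mono[OF m, of "\<gamma> * lam"] m \<open>0 \<le> \<gamma>\<close> \<open>0 \<le> lam\<close> by (simp add: c_def)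
  then have "m * (\<gamma> + c) * G \<le> m * (\<gamma> * (1 + lam)) * G"
    using m \<open>G \<ge> 0\<close> by (intro mult_right_mono mult_left_mono) (auto simp: algebra_simps)
  then have "(m * (\<gamma> + c) * G)\<^sup>2 \<le> (m * (\<gamma> * (1 + lam)) * G)\<^sup>2"
    using m \<open>0 \<le> \<gamma>\<close> \<open>0 \<le> c\<close> \<open>G \<ge> 0\<close> by (intro power_mono) auto
  also have "\<dots> = (m * G)\<^sup>2 * (\<gamma> * (1 + lam))\<^sup>2"
    by (simp add: power_mult_distrib)
  finally have err: "(m * (\<gamma> + c) * G)\<^sup>2 \<le> (m * G)\<^sup>2 * (\<gamma> * (1 + lam))\<^sup>2" .
  have "\<forall>i\<in>{1..S}. z i 1 = x0 \<and> (\<forall>j\<in>{1..I i}. g i j \<in> subdiff (f i j) (z i j) \<and>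
      z i (j + 1) = closest_point X (z i j - \<gamma> *\<^sub>R g i j - c *\<^sub>R h))"
    using clients unfolding c_def m_def .
  from FISM_round[OF X \<open>x0 \<in> X\<close> \<open>y \<in> X\<close> \<open>S \<ge> 1\<close> I_pos bounds h \<open>0 \<le> \<gamma>\<close> \<open>0 \<le> c\<close> this x', folded m_def]
  have "S / 2 * (norm (x' - y))\<^sup>2 \<le> S / 2 * ((norm (x0 - y))\<^sup>2
      - 2 * \<gamma> / S * ((\<Sum>i\<in>{1..S}. \<Sum>j\<in>{1..I i}. f i j x0) - (\<Sum>i\<in>{1..S}. \<Sum>j\<in>{1..I i}. f i j y))
      - 2 * c * m / S * (H x0 - H y) + (m * (\<gamma> + c) * G)\<^sup>2 / S)"
    by (rule mult_left_mono) simp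
  also have "\<dots> = S / 2 * (norm (x0 - y))\<^sup>2
      - \<gamma> * ((\<Sum>i\<in>{1..S}. \<Sum>j\<in>{1..I i}. f i j x0) - (\<Sum>i\<in>{1..S}. \<Sum>j\<in>{1..I i}. f i j y))
      - \<gamma> * lam * (H x0 - H y) + (m * (\<gamma> + c) * G)\<^sup>2 / 2"
    using S unfolding cm by (simp add: field_simps)
  finally show ?thesis using err by (simp add: right_diff_distrib)
qed

lemma FISM_round_in_set:
  fixes I :: "nat \<Rightarrow> nat"
  assumes "convex X" "closed X" "X \<noteq> {}" and "S \<ge> 1" and I_pos: "\<forall>i\<in>{1..S}. I i \<ge> 1"
    and proj: "\<forall>i\<in>{1..S}. \<forall>j\<in>{1..I i}. z i (j + 1) = closest_point X (v i j)"
    and x': "x' = (1 / real S) *\<^sub>R (\<Sum>i\<in>{1..S}. z i (I i + 1))"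
  shows "x' \<in> X"
proof -
  have "z i (I i + 1) \<in> X" if "i \<in> {1..S}" for i
  proof -
    have "I i \<in> {1..I i}" using I_pos that by simp
    then show ?thesis using proj that closest_point_in_set[OF assms(2,3)] by simp
  qed
  then have "(\<Sum>i\<in>{1..S}. (1 / real S) *\<^sub>R z i (I i + 1)) \<in> X"
    using \<open>S \<ge> 1\<close> by (intro convex_sum[OF finite_atLeastAtMost \<open>convex X\<close>]) auto
  then show ?thesis by (simp add: x' scaleR_sum_right)
qed

lemma convex_problem_uniform_bounds:
  fixes f :: "nat \<Rightarrow> nat \<Rightarrow> 'a::euclidean_space \<Rightarrow> real" and H :: "'a \<Rightarrow> real"
  assumes "compact X" and f_cvx: "\<forall>i\<in>{1..S}. \<forall>j\<in>{1..I i}. convex_on UNIV (f i j)"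
    and H_cvx: "convex_on UNIV H"
  shows "\<exists>G. subgrad_bounded_lipschitz_on G X H \<and>
           (\<forall>i\<in>{1..S}. \<forall>j\<in>{1..I i}. subgrad_bounded_lipschitz_on G X (f i j))"
proof -
  define \<Phi> where "\<Phi> = insert H ((\<lambda>(i, j). f i j) ` Sigma {1..S} (\<lambda>i. {1..I i}))"
  have "finite \<Phi>" "\<forall>\<phi>\<in>\<Phi>. convex_on UNIV \<phi>" using f_cvx H_cvx by (auto simp: \<Phi>_def)
  then obtain G where G: "\<forall>\<phi>\<in>\<Phi>. subgrad_bounded_lipschitz_on G X \<phi>"
    using finite_convex_family_subgrad_bounded_lipschitz[OF _ _ \<open>compact X\<close>] by blast
  moreover have "H \<in> \<Phi>" "\<forall>i\<in>{1..S}. \<forall>j\<in>{1..I i}. f i j \<in> \<Phi>" by (force simp: \<Phi>_def)+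
  ultimately show ?thesis by blast
qed

lemma FISM_iteration_gap:
  fixes f :: "nat \<Rightarrow> nat \<Rightarrow> 'a::euclidean_space \<Rightarrow> real" and H :: "'a \<Rightarrow> real"
  assumes fism: "FISM S I f H X gam lam x"
    and X: "X \<noteq> {}" "closed X" "convex X"
    and "S \<ge> 1" and I_pos: "\<forall>i\<in>{1..S}. I i \<ge> 1"
    and f_bounds: "\<forall>i\<in>{1..S}. \<forall>j\<in>{1..I i}. subgrad_bounded_lipschitz_on G X (f i j)"
    and H_bound: "\<forall>z\<in>X. \<forall>g\<in>subdiff H z. norm g \<le> G"
    and "y \<in> X" and gam: "\<And>k. 0 \<le> gam k" and lam: "\<And>k. 0 \<le> lam k" and "k \<ge> 2"
  shows "x k \<in> X"
    and "gam k * ((\<Sum>i\<in>{1..S}. \<Sum>j\<in>{1..I i}. f i j (x k)) - (\<Sum>i\<in>{1..S}. \<Sum>j\<in>{1..I i}. f i j y))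
           \<le> S / 2 * ((norm (x k - y))\<^sup>2 - (norm (x (k + 1) - y))\<^sup>2) + gam k * lam k * (H y - H (x k))
             + (real (\<Sum>i\<in>{1..S}. I i) * G)\<^sup>2 / 2 * (gam k * (1 + lam k))\<^sup>2"
proof -
  obtain hH z g where fi: "\<forall>k\<ge>1. hH k \<in> subdiff H (x k) \<and>
      (\<forall>i\<in>{1..S}. z k i 1 = x k \<and> (\<forall>j\<in>{1..I i}. g k i j \<in> subdiff (f i j) (z k i j) \<and>
        z k i (j + 1) = closest_point X (z k i j - gam k *\<^sub>R g k i j
          - (gam k * lam k / real (\<Sum>i\<in>{1..S}. I i)) *\<^sub>R hH k))) \<and>
      x (k + 1) = (1 / real S) *\<^sub>R (\<Sum>i\<in>{1..S}. z k i (I i + 1))"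
    using fism unfolding FISM_def by blast
  define k' where "k' = k - 1"
  have k': "k = k' + 1" "k' \<ge> 1" using \<open>k \<ge> 2\<close> by (simp_all add: k'_def)
  have "x (k' + 1) \<in> X"
    using fi \<open>k' \<ge> 1\<close> by (intro FISM_round_in_set[OF X(3,2,1) \<open>S \<ge> 1\<close> I_pos, of "z k'"]) auto
  then show "x k \<in> X" using k' by simp
  moreover have hk: "hH k \<in> subdiff H (x k)"
    and clients: "\<forall>i\<in>{1..S}. z k i 1 = x k \<and> (\<forall>j\<in>{1..I i}. g k i j \<in> subdiff (f i j) (z k i j) \<and>
      z k i (j + 1) = closest_point X (z k i j - gam k *\<^sub>R g k i j
        - (gam k * lam k / real (\<Sum>i\<in>{1..S}. I i)) *\<^sub>R hH k))"
    and mean: "x (k + 1) = (1 / real S) *\<^sub>R (\<Sum>i\<in>{1..S}. z k i (I i + 1))"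
    using fi \<open>k \<ge> 2\<close> by simp_all
  ultimately have "norm (hH k) \<le> G" using H_bound by blast
  from FISM_round_gap[OF X(3,2) \<open>x k \<in> X\<close> \<open>y \<in> X\<close> \<open>S \<ge> 1\<close> I_pos f_bounds hk this gam lam clients mean]
  show "gam k * ((\<Sum>i\<in>{1..S}. \<Sum>j\<in>{1..I i}. f i j (x k)) - (\<Sum>i\<in>{1..S}. \<Sum>j\<in>{1..I i}. f i j y))
      \<le> S / 2 * ((norm (x k - y))\<^sup>2 - (norm (x (k + 1) - y))\<^sup>2) + gam k * lam k * (H y - H (x k))
        + (real (\<Sum>i\<in>{1..S}. I i) * G)\<^sup>2 / 2 * (gam k * (1 + lam k))\<^sup>2" .
qed

lemma FISM_descent:
  fixes f :: "nat \<Rightarrow> nat \<Rightarrow> 'a::euclidean_space \<Rightarrow> real" and H :: "'a \<Rightarrow> real"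
  assumes fism: "FISM S I f H X gam lam x"
    and X: "X \<noteq> {}" "compact X" "convex X"
    and "S \<ge> 1" and I_pos: "\<forall>i\<in>{1..S}. I i \<ge> 1"
    and f_cvx: "\<forall>i\<in>{1..S}. \<forall>j\<in>{1..I i}. convex_on UNIV (f i j)" and H_cvx: "convex_on UNIV H"
    and "y \<in> X" and gam: "\<And>k. 0 \<le> gam k" and lam: "\<And>k. 0 \<le> lam k"
  shows "\<exists>C\<ge>0. \<forall>k\<ge>2.
     gam k * ((\<Sum>i\<in>{1..S}. \<Sum>j\<in>{1..I i}. f i j (x k)) - (\<Sum>i\<in>{1..S}. \<Sum>j\<in>{1..I i}. f i j y))
       \<le> S / 2 * ((norm (x k - y))\<^sup>2 - (norm (x (k + 1) - y))\<^sup>2)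
         + C * (gam k * lam k + (gam k * (1 + lam k))\<^sup>2)"
proof -
  obtain G where H_sub: "\<forall>z\<in>X. \<forall>g\<in>subdiff H z. norm g \<le> G" and H_lip: "G-lipschitz_on X H"
    and f_bounds: "\<forall>i\<in>{1..S}. \<forall>j\<in>{1..I i}. subgrad_bounded_lipschitz_on G X (f i j)"
    using convex_problem_uniform_bounds[OF X(2) f_cvx H_cvx] unfolding subgrad_bounded_lipschitz_on_def by blast
  note gap = FISM_iteration_gap[OF fism X(1) compact_imp_closed[OF X(2)] X(3) \<open>S \<ge> 1\<close> I_pos f_bounds H_sub
      \<open>y \<in> X\<close> gam lam]
  define M where "M = (real (\<Sum>i\<in>{1..S}. I i) * G)\<^sup>2 / 2"
  define C where "C = G * diameter X + M"
  have "0 \<le> G" using lipschitz_on_nonneg[OF H_lip] .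
  have "0 \<le> diameter X" using diameter_ge_0[OF compact_imp_bounded[OF X(2)]] .
  \<comment> \<open>the \<open>H\<close>-term of the gap has no sign; it is absorbed into \<open>C\<close> via the diameter of \<open>X\<close>\<close>
  have absorb: "gam k * lam k * (H y - H (x k)) + M * (gam k * (1 + lam k))\<^sup>2
      \<le> C * (gam k * lam k + (gam k * (1 + lam k))\<^sup>2)" if "k \<ge> 2" for k
  proof -
    have "H y - H (x k) \<le> G * dist y (x k)"
      using lipschitz_onD[OF H_lip \<open>y \<in> X\<close> gap(1)[OF that]] by (simp add: dist_real_def)
    also have "\<dots> \<le> G * diameter X"
      using diameter_bounded_bound[OF compact_imp_bounded[OF X(2)] \<open>y \<in> X\<close> gap(1)[OF that]] \<open>0 \<le> G\<close>
      by (rule mult_left_mono)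
    finally have "gam k * lam k * (H y - H (x k)) \<le> gam k * lam k * (G * diameter X)"
      using gam lam by (simp add: mult_left_mono)
    moreover have "0 \<le> G * diameter X * (gam k * (1 + lam k))\<^sup>2" "0 \<le> M * (gam k * lam k)"
      using \<open>0 \<le> G\<close> \<open>0 \<le> diameter X\<close> gam[of k] lam[of k] by (simp_all add: M_def)
    moreover have "C * (gam k * lam k + (gam k * (1 + lam k))\<^sup>2) = gam k * lam k * (G * diameter X)
        + G * diameter X * (gam k * (1 + lam k))\<^sup>2 + M * (gam k * lam k) + M * (gam k * (1 + lam k))\<^sup>2"
      by (simp add: C_def algebra_simps)
    ultimately show ?thesis by linarith
  qed
  moreover have "0 \<le> C" using \<open>0 \<le> G\<close> \<open>0 \<le> diameter X\<close> by (simp add: C_def M_def)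
  ultimately show ?thesis using gap(2)[folded M_def]
    by (intro exI[of _ C]) (smt (verit))
qed

section \<open>Polynomially decaying stepsizes\<close>

lemma sum_powr_le:
  assumes p: "0 < p" "p < 1" and "K \<ge> 1"
  shows "(\<Sum>k\<in>{1..K}. real k powr (p - 1)) \<le> real K powr p / p"
  using \<open>K \<ge> 1\<close>
proof (induction K rule: nat_induct_at_least)
  case base
  then show ?case using p by simp
next
  case (Suc K)
  define t where "t = real K / real (Suc K)"
  have t: "0 < t" "t < 1" using Suc by (auto simp: t_def)
  \<comment> \<open>concavity of \<open>s \<mapsto> s powr p\<close>, in the form \<open>t powr p \<le> p t + (1 - p)\<close>\<close>
  have "t powr p * 1 powr (1 - p) \<le> p * t + (1 - p) * 1"
    by (rule Youngs_inequality_0) (use p t in auto)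
  moreover have "real K powr p = t powr p * real (Suc K) powr p"
    unfolding t_def using Suc by (simp add: powr_divide)
  ultimately have "real K powr p \<le> (p * t + (1 - p)) * real (Suc K) powr p"
    by (simp add: mult_right_mono)
  also have "\<dots> = real (Suc K) powr p - p * (real (Suc K) powr p / real (Suc K))"
    by (simp add: t_def field_simps)
  also have "real (Suc K) powr p / real (Suc K) = real (Suc K) powr (p - 1)"
    by (simp add: powr_diff)
  finally have "real K powr p + p * real (Suc K) powr (p - 1) \<le> real (Suc K) powr p"
    by (simp add: algebra_simps)
  from divide_right_mono[OF this, of p]
  have "real K powr p / p + real (Suc K) powr (p - 1) \<le> real (Suc K) powr p / p"
    using p by (simp add: add_divide_distrib)
  then show ?case using Suc.IH by simp
qed

lemma sum_le_telescoping:
  fixes a D r :: "nat \<Rightarrow> real"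
  assumes step: "\<And>k. k \<ge> 2 \<Longrightarrow> a k \<le> c * (D k - D (k + 1)) + r k"
    and "0 \<le> c" "\<And>k. 0 \<le> D k" "\<And>k. 0 \<le> r k" and "K \<ge> 1"
  shows "(\<Sum>k\<in>{1..K}. a k) \<le> a 1 + c * D 2 + (\<Sum>k\<in>{1..K}. r k)"
proof -
  have "(\<Sum>k\<in>{1..K}. a k) \<le> a 1 + c * (D 2 - D (K + 1)) + (\<Sum>k\<in>{1..K}. r k)"
    using \<open>K \<ge> 1\<close>
  proof (induction K rule: nat_induct_at_least)
    case base
    then show ?case using \<open>0 \<le> r 1\<close> by (simp add: numeral_2_eq_2)
  next
    case (Suc K)
    then show ?case using step[of "Suc K"] by (simp add: algebra_simps)
  qed
  moreover have "0 \<le> c * D (K + 1)" using assms by simp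
  ultimately show ?thesis by (simp add: algebra_simps)
qed

lemma polynomial_stepsizes_error_le:
  assumes "0 < \<epsilon>" "\<epsilon> < 1/2" "0 \<le> gam1" "0 \<le> lam1" "k \<ge> 1"
  defines "gam \<equiv> gam1 / real k powr (1/2 + \<epsilon>/2)" and "lam \<equiv> lam1 / real k powr (1/2 - \<epsilon>)"
  shows "gam * lam + (gam * (1 + lam))\<^sup>2 \<le> (gam1 * lam1 + (gam1 * (1 + lam1))\<^sup>2) * real k powr (\<epsilon>/2 - 1)"
proof -
  have k: "real k \<ge> 1" using \<open>k \<ge> 1\<close> by simp
  have inv: "1 / real k powr e = real k powr (- e)" for e
    by (simp add: powr_minus_divide)
  have "gam * lam = gam1 * lam1 * (1 / real k powr (1/2 + \<epsilon>/2) * (1 / real k powr (1/2 - \<epsilon>)))"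
    by (simp add: gam_def lam_def)
  also have "\<dots> = gam1 * lam1 * real k powr (\<epsilon>/2 - 1)"
    unfolding inv powr_add[symmetric] by simp
  finally have gl: "gam * lam = gam1 * lam1 * real k powr (\<epsilon>/2 - 1)" .
  have "gam\<^sup>2 = gam1\<^sup>2 * (1 / real k powr (1/2 + \<epsilon>/2) * (1 / real k powr (1/2 + \<epsilon>/2)))"
    by (simp add: gam_def power2_eq_square)
  also have "\<dots> = gam1\<^sup>2 * real k powr (- 1 - \<epsilon>)"
    unfolding inv powr_add[symmetric] by simp
  also have "\<dots> \<le> gam1\<^sup>2 * real k powr (\<epsilon>/2 - 1)"
    using k \<open>0 < \<epsilon>\<close> by (intro mult_left_mono powr_mono) auto
  finally have g2: "gam\<^sup>2 \<le> gam1\<^sup>2 * real k powr (\<epsilon>/2 - 1)" .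
  have "real k powr (1/2 - \<epsilon>) \<ge> 1"
    using k \<open>\<epsilon> < 1/2\<close> by (intro ge_one_powr_ge_zero) auto
  then have "lam \<le> lam1"
    using \<open>0 \<le> lam1\<close> by (simp add: lam_def divide_le_eq mult_le_cancel_left1)
  moreover have "0 \<le> lam" using \<open>0 \<le> lam1\<close> by (simp add: lam_def)
  ultimately have "(1 + lam)\<^sup>2 \<le> (1 + lam1)\<^sup>2" by (simp add: power_mono)
  then have "(gam * (1 + lam))\<^sup>2 \<le> gam1\<^sup>2 * real k powr (\<epsilon>/2 - 1) * (1 + lam1)\<^sup>2"
    using g2 by (simp add: power_mult_distrib mult_mono)
  moreover have "(gam1 * lam1 + (gam1 * (1 + lam1))\<^sup>2) * real k powr (\<epsilon>/2 - 1)
      = gam1 * lam1 * real k powr (\<epsilon>/2 - 1) + gam1\<^sup>2 * real k powr (\<epsilon>/2 - 1) * (1 + lam1)\<^sup>2"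
    by (simp add: power2_eq_square algebra_simps)
  ultimately show ?thesis using gl by linarith
qed

lemma polynomial_stepsizes_weighted_sum_le:
  fixes a D :: "nat \<Rightarrow> real" and \<epsilon> gam1 lam1 c C :: real
  defines "gam \<equiv> \<lambda>k. gam1 / real k powr (1/2 + \<epsilon>/2)" and "lam \<equiv> \<lambda>k. lam1 / real k powr (1/2 - \<epsilon>)"
  assumes eps: "0 < \<epsilon>" "\<epsilon> < 1/2" and "0 \<le> gam1" "0 \<le> lam1" "0 \<le> c" "0 \<le> C"
    and D: "\<And>k. 0 \<le> D k"
    and descent: "\<And>k. k \<ge> 2 \<Longrightarrow> gam k * a k \<le> c * (D k - D (k + 1))
                    + C * (gam k * lam k + (gam k * (1 + lam k))\<^sup>2)"
  shows "\<exists>B\<ge>0. \<forall>K\<ge>1. (\<Sum>k\<in>{1..K}. gam k * a k) \<le> B * real K powr (\<epsilon>/2)"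
proof -
  define p where "p = \<epsilon> / 2"
  define E where "E = gam1 * lam1 + (gam1 * (1 + lam1))\<^sup>2"
  define B where "B = \<bar>gam1 * a 1\<bar> + c * D 2 + C * E / p"
  have p: "0 < p" "p < 1" using eps by (auto simp: p_def)
  have "0 \<le> E" using \<open>0 \<le> gam1\<close> \<open>0 \<le> lam1\<close> by (simp add: E_def)
  have "(\<Sum>k\<in>{1..K}. gam k * a k) \<le> B * real K powr p" if K: "K \<ge> 1" for K
  proof -
    have r0: "0 \<le> C * (gam k * lam k + (gam k * (1 + lam k))\<^sup>2)" for k
      using \<open>0 \<le> C\<close> \<open>0 \<le> gam1\<close> \<open>0 \<le> lam1\<close> by (simp add: gam_def lam_def)
    have "(\<Sum>k\<in>{1..K}. C * (gam k * lam k + (gam k * (1 + lam k))\<^sup>2))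
        \<le> (\<Sum>k\<in>{1..K}. C * E * real k powr (p - 1))"
      using polynomial_stepsizes_error_le[OF eps \<open>0 \<le> gam1\<close> \<open>0 \<le> lam1\<close>] \<open>0 \<le> C\<close>
      by (intro sum_mono) (auto simp: gam_def lam_def E_def p_def mult.assoc intro: mult_left_mono)
    also have "\<dots> = C * E * (\<Sum>k\<in>{1..K}. real k powr (p - 1))"
      by (simp add: sum_distrib_left)
    also have "\<dots> \<le> C * E * (real K powr p / p)"
      using sum_powr_le[OF p K] \<open>0 \<le> C\<close> \<open>0 \<le> E\<close> by (intro mult_left_mono) simp_all
    finally have "(\<Sum>k\<in>{1..K}. gam k * a k) \<le> gam1 * a 1 + c * D 2 + C * E * (real K powr p / p)"
      using sum_le_telescoping[where a = "\<lambda>k. gam k * a k"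
          and r = "\<lambda>k. C * (gam k * lam k + (gam k * (1 + lam k))\<^sup>2)", OF descent \<open>0 \<le> c\<close> D r0 K]
      by (simp add: gam_def)
    also have "\<dots> \<le> (\<bar>gam1 * a 1\<bar> + c * D 2) * real K powr p + C * E * (real K powr p / p)"
    proof -
      have "1 \<le> real K powr p" using K p by (intro ge_one_powr_ge_zero) auto
      moreover have "0 \<le> \<bar>gam1 * a 1\<bar> + c * D 2" using \<open>0 \<le> c\<close> D[of 2] by simp
      ultimately have "\<bar>gam1 * a 1\<bar> + c * D 2 \<le> (\<bar>gam1 * a 1\<bar> + c * D 2) * real K powr p"
        using mult_left_mono[of 1 "real K powr p"] by simp
      then show ?thesis by simp
    qed
    finally show ?thesis by (simp add: B_def algebra_simps)
  qed
  moreover have "0 \<le> B" using \<open>0 \<le> c\<close> \<open>0 \<le> C\<close> \<open>0 \<le> E\<close> D p by (simp add: B_def)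
  ultimately show ?thesis unfolding p_def by blast
qed

lemma sum_inverse_powr_ge:
  assumes "0 \<le> a" "K \<ge> 1"
  shows "real K powr (1 - a) \<le> (\<Sum>k\<in>{1..K}. 1 / real k powr a)"
proof -
  have "real K * (1 / real K powr a) \<le> (\<Sum>k\<in>{1..K}. 1 / real k powr a)"
    using sum_bounded_below[of "{1..K}" "1 / real K powr a" "\<lambda>k. 1 / real k powr a"] assms
    by (simp add: divide_left_mono powr_mono2)
  then show ?thesis using \<open>K \<ge> 1\<close> by (simp add: powr_diff)
qed

lemma polynomial_stepsizes_rate:
  fixes a D :: "nat \<Rightarrow> real" and \<epsilon> gam1 lam1 c C :: real
  defines "gam \<equiv> \<lambda>k. gam1 / real k powr (1/2 + \<epsilon>/2)" and "lam \<equiv> \<lambda>k. lam1 / real k powr (1/2 - \<epsilon>)"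
  assumes eps: "0 < \<epsilon>" "\<epsilon> < 1/2" and "0 < gam1" "0 \<le> lam1" "0 \<le> c" "0 \<le> C"
    and D: "\<And>k. 0 \<le> D k"
    and descent: "\<And>k. k \<ge> 2 \<Longrightarrow> gam k * a k \<le> c * (D k - D (k + 1))
                    + C * (gam k * lam k + (gam k * (1 + lam k))\<^sup>2)"
  shows "\<exists>B. \<forall>K\<ge>1. (\<Sum>k\<in>{1..K}. gam k * a k) / (\<Sum>k\<in>{1..K}. gam k) \<le> B / real K powr (1/2 - \<epsilon>)"
proof -
  obtain B where "0 \<le> B" and num: "\<forall>K\<ge>1. (\<Sum>k\<in>{1..K}. gam k * a k) \<le> B * real K powr (\<epsilon>/2)"
    using polynomial_stepsizes_weighted_sum_le[OF eps less_imp_le[OF \<open>0 < gam1\<close>] \<open>0 \<le> lam1\<close> \<open>0 \<le> c\<close>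
        \<open>0 \<le> C\<close> D descent[unfolded gam_def lam_def]]
    unfolding gam_def lam_def by blast
  have "(\<Sum>k\<in>{1..K}. gam k * a k) / (\<Sum>k\<in>{1..K}. gam k) \<le> B / gam1 / real K powr (1/2 - \<epsilon>)"
    if K: "K \<ge> 1" for K
  proof -
    have den: "gam1 * real K powr (1/2 - \<epsilon>/2) \<le> (\<Sum>k\<in>{1..K}. gam k)"
      using mult_left_mono[OF sum_inverse_powr_ge[of "1/2 + \<epsilon>/2" K] less_imp_le[OF \<open>0 < gam1\<close>]] eps K
      by (simp add: gam_def sum_distrib_left)
    have low: "0 < gam1 * real K powr (1/2 - \<epsilon>/2)" using \<open>0 < gam1\<close> K by simp
    have "(\<Sum>k\<in>{1..K}. gam k * a k) / (\<Sum>k\<in>{1..K}. gam k) \<le> B * real K powr (\<epsilon>/2) / (\<Sum>k\<in>{1..K}. gam k)"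
      using num K den low by (intro divide_right_mono) auto
    also have "\<dots> \<le> B * real K powr (\<epsilon>/2) / (gam1 * real K powr (1/2 - \<epsilon>/2))"
      using den low \<open>0 \<le> B\<close> by (intro divide_left_mono) auto
    also have "\<dots> = B / gam1 / real K powr (1/2 - \<epsilon>)"
    proof -
      have "real K powr (\<epsilon>/2) * real K powr (1/2 - \<epsilon>) = real K powr (1/2 - \<epsilon>/2)"
        by (simp add: powr_add[symmetric])
      then show ?thesis using K \<open>0 < gam1\<close> by (simp add: field_simps)
    qed
    finally show ?thesis .
  qed
  then show ?thesis by blast
qed

theorem theorem2:
  fixes H :: "'a::euclidean_space \<Rightarrow> real"
    and f :: "nat \<Rightarrow> nat \<Rightarrow> 'a \<Rightarrow> real"
    and S :: nat and I :: "nat \<Rightarrow> nat"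
    and X :: "'a set" and xH :: 'a
    and \<mu>H \<epsilon> gam1 lam1 :: real
    and x :: "nat \<Rightarrow> 'a"
  assumes S_pos: "S \<ge> 1"
    and I_pos: "\<forall>i\<in>{1..S}. I i \<ge> 1"
    and muH: "\<mu>H > 0" and H_sc: "strongly_convex \<mu>H H"
    and f_cvx: "\<forall>i\<in>{1..S}. \<forall>j\<in>{1..I i}. convex_on UNIV (f i j)"
    and X: "X \<noteq> {}" "compact X" "convex X"
    and xH: "bilevel_solution H (\<lambda>y. \<Sum>i\<in>{1..S}. \<Sum>j\<in>{1..I i}. f i j y) X xH"
    and eps: "0 < \<epsilon>" "\<epsilon> < 1/2"
    and step: "gam1 > 0" "lam1 > 0"
      "gam1 * lam1 * \<mu>H \<le> 2 * real (\<Sum>i\<in>{1..S}. I i)"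
    and fism: "FISM S I f H X
                 (\<lambda>k. gam1 / real k powr (1/2 + \<epsilon>/2))
                 (\<lambda>k. lam1 / real k powr (1/2 - \<epsilon>)) x"
  shows "\<exists>C. \<forall>K\<ge>1.
     (\<lambda>y. \<Sum>i\<in>{1..S}. \<Sum>j\<in>{1..I i}. f i j y)
        ((1 / (\<Sum>k\<in>{1..K}. gam1 / real k powr (1/2 + \<epsilon>/2))) *\<^sub>R
          (\<Sum>k\<in>{1..K}. (gam1 / real k powr (1/2 + \<epsilon>/2)) *\<^sub>R x k))
     - (\<Sum>i\<in>{1..S}. \<Sum>j\<in>{1..I i}. f i j xH)
     \<le> C / real K powr (1/2 - \<epsilon>)"
proof -
  define F where "F y = (\<Sum>i\<in>{1..S}. \<Sum>j\<in>{1..I i}. f i j y)" for y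
  define gam where "gam k = gam1 / real k powr (1/2 + \<epsilon>/2)" for k :: nat
  define lam where "lam k = lam1 / real k powr (1/2 - \<epsilon>)" for k :: nat
  have "xH \<in> X" using xH unfolding bilevel_solution_def by blast
  have F_cvx: "convex_on UNIV F"
    unfolding F_def using f_cvx by (intro convex_on_sum_fun) auto
  have H_cvx: "convex_on UNIV H" using strongly_convex_imp_convex_on[OF H_sc] muH by simp
  obtain C where "C \<ge> 0" and descent: "\<forall>k\<ge>2. gam k * (F (x k) - F xH)
      \<le> S / 2 * ((norm (x k - xH))\<^sup>2 - (norm (x (k + 1) - xH))\<^sup>2) + C * (gam k * lam k + (gam k * (1 + lam k))\<^sup>2)"
    using FISM_descent[OF fism X S_pos I_pos f_cvx H_cvx \<open>xH \<in> X\<close>] step(1,2)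
    unfolding F_def gam_def lam_def by force
  obtain B where B: "\<forall>K\<ge>1. (\<Sum>k\<in>{1..K}. gam k * (F (x k) - F xH)) / (\<Sum>k\<in>{1..K}. gam k) \<le> B / real K powr (1/2 - \<epsilon>)"
    using polynomial_stepsizes_rate[OF eps step(1) less_imp_le[OF step(2)] _ \<open>C \<ge> 0\<close>, of "S / 2"
        "\<lambda>k. (norm (x k - xH))\<^sup>2" "\<lambda>k. F (x k) - F xH"] descent
    unfolding gam_def lam_def by auto
  have "F ((1 / sum gam {1..K}) *\<^sub>R (\<Sum>k\<in>{1..K}. gam k *\<^sub>R x k)) - F xH \<le> B / real K powr (1/2 - \<epsilon>)"
    if "K \<ge> 1" for K
  proof -
    have "0 < sum gam {1..K}" using that step(1) by (intro sum_pos) (auto simp: gam_def)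
    then have "F ((1 / sum gam {1..K}) *\<^sub>R (\<Sum>k\<in>{1..K}. gam k *\<^sub>R x k)) - F xH
        \<le> (\<Sum>k\<in>{1..K}. gam k * (F (x k) - F xH)) / sum gam {1..K}"
      using step(1) by (intro convex_on_weighted_mean_gap[OF F_cvx]) (auto simp: gam_def)
    also have "\<dots> \<le> B / real K powr (1/2 - \<epsilon>)" using B that by blast
    finally show ?thesis .
  qed
  then show ?thesis unfolding F_def gam_def by blast
qed

end
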